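(* For every set $V \subset \mathcal{A}_0$ we have $$V^* = \overline{(\mathrm{cm}(V))^T},$$ where the closure is taken in the space $\mathcal{A}$ (topology of locally uniform convergence in $D$).
   Context: $D=\{z:|z|<1\}$, $\overline D$ its closure. $\mathcal{A}$ is the space of functions $f(z)=\sum_{k\ge0}a_k(f)z^k$ analytic in $D$, with the topology of locally uniform convergence; $\mathcal{A}_0=\{f\in\mathcal{A}: a_0(f)=1\}$. $\mathcal{A}(\overline D)$ is the set of functions analytic in some disk $\{|z|<R\}$ with $R>1$, and $\mathcal{A}_0(\overline D)=\{g\in\mathcal{A}(\overline D):a_0(g)=1\}$. The Hadamard product is $(f*g)(z)=\sum_{k\ge0}a_k(f)a_k(g)z^k$. For $V\subset\mathcal{A}_0$, the dual is $V^*=\{g\in\mathcal{A}_0:(f*g)(z)\ne0 \text{ for all } z\in D,\ f\in V\}$. For $x\in\overline D$, $(P_xf)(z)=f(xz)$, and the complete hull is $\mathrm{cm}(V)=\{P_xf: f\in V,\ x\in\overline D\}$. For $V\subset\mathcal{A}_0$, $V^T=\{g\in\mathcal{A}_0(\overline D): (f*g)(1)\ne0 \text{ for all } f\in V\}$. *)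

theory Defs
  imports "HOL-Analysis.Analysis" "HOL-Analysis.FPS_Convergence"
begin

text \<open>An analytic function on the unit disk D is represented by its Taylor series at 0,
  i.e. a formal power series with radius of convergence at least 1; its value at z is
  eval_fps f z. The k-th coefficient a_k(f) is fps_nth f k.\<close>

definition A_space :: "complex fps set" where
  "A_space = {f. fps_conv_radius f \<ge> 1}"

definition A0_space :: "complex fps set" where
  "A0_space = {f \<in> A_space. fps_nth f 0 = 1}"

definition AD_space :: "complex fps set" where
  "AD_space = {g. fps_conv_radius g > 1}"

definition AD0_space :: "complex fps set" where
  "AD0_space = {g \<in> AD_space. fps_nth g 0 = 1}"

definition hadamard :: "complex fps \<Rightarrow> complex fps \<Rightarrow> complex fps" where
  "hadamard f g = Abs_fps (\<lambda>k. fps_nth f k * fps_nth g k)"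

definition dual :: "complex fps set \<Rightarrow> complex fps set" where
  "dual V = {g \<in> A0_space. \<forall>f\<in>V. \<forall>z\<in>ball 0 1. eval_fps (hadamard f g) z \<noteq> 0}"

text \<open>(P_x f)(z) = f(x z).\<close>
definition Pop :: "complex \<Rightarrow> complex fps \<Rightarrow> complex fps" where
  "Pop x f = Abs_fps (\<lambda>k. x ^ k * fps_nth f k)"

definition cm :: "complex fps set \<Rightarrow> complex fps set" where
  "cm V = {Pop x f | x f. f \<in> V \<and> x \<in> cball 0 1}"

definition Tdual :: "complex fps set \<Rightarrow> complex fps set" where
  "Tdual V = {g \<in> AD0_space. \<forall>f\<in>V. eval_fps (hadamard f g) 1 \<noteq> 0}"

definition lu_closure :: "complex fps set \<Rightarrow> complex fps set" where
  "lu_closure S = {g \<in> A_space. \<forall>K. compact K \<and> K \<subseteq> ball 0 1 \<longrightarrow>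
      (\<forall>e>0. \<exists>h\<in>S. \<forall>z\<in>K. norm (eval_fps h z - eval_fps g z) < e)}"

end

theory Submission
  imports Defs "HOL-Complex_Analysis.Complex_Analysis"
begin

text \<open>If g \<in> dual V and 0 < r < 1, the dilation Pop r g is analytic beyond the closed disk
  and lies in Tdual (cm V), because (Pop x f * Pop r g)(1) = (f * g)(x r) with |x r| < 1; and
  Pop r g tends to g locally uniformly as r tends to 1. Conversely Tdual (cm V) \<subseteq> dual V,
  since (f * h)(z) = (Pop z f * h)(1), and dual V is closed: Cauchy's estimates make Hadamard
  multiplication by f continuous for locally uniform convergence, so by Hurwitz's theorem a
  limit of the zero-free functions f * h_n is zero-free unless it vanishes identically, which
  (f * g)(0) = 1 excludes.\<close>

lemma hadamard_nth [simp]: "fps_nth (hadamard f g) k = fps_nth f k * fps_nth g k"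
  by (simp add: hadamard_def)

lemma Pop_nth [simp]: "fps_nth (Pop x f) k = x ^ k * fps_nth f k"
  by (simp add: Pop_def)

lemma hadamard_diff_right: "hadamard f (g - h) = hadamard f g - hadamard f h"
  by (rule fps_ext) (simp add: algebra_simps)

lemma hadamard_Pop_left: "hadamard (Pop x f) g = Pop x (hadamard f g)"
  by (rule fps_ext) (simp add: mult_ac)

lemma hadamard_Pop_right: "hadamard f (Pop x g) = Pop x (hadamard f g)"
  by (rule fps_ext) (simp add: mult_ac)

lemma eval_fps_Pop: "eval_fps (Pop x f) z = eval_fps f (x * z)"
  by (simp add: eval_fps_def power_mult_distrib mult_ac)

lemma ball_subset_eball_fps_conv_radius:
  fixes f :: "'a :: {banach, real_normed_div_algebra} fps"
  assumes "fps_conv_radius f \<ge> 1"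
  shows "ball (0 :: 'a) 1 \<subseteq> eball 0 (fps_conv_radius f)"
proof
  fix z :: 'a assume "z \<in> ball 0 1"
  then have "ereal (norm z) < 1" by simp
  then have "ereal (norm z) < fps_conv_radius f" using assms by (rule less_le_trans)
  then show "z \<in> eball 0 (fps_conv_radius f)" by simp
qed

lemma holomorphic_on_eval_fps_unit_ball:
  "fps_conv_radius (f :: complex fps) \<ge> 1 \<Longrightarrow> eval_fps f holomorphic_on ball 0 1"
  by (rule holomorphic_on_eval_fps) (rule ball_subset_eball_fps_conv_radius)

lemma summable_norm_fps_nth_power:
  fixes f :: "complex fps"
  assumes "fps_conv_radius f \<ge> 1" "0 \<le> q" "q < 1"
  shows "summable (\<lambda>k. norm (fps_nth f k) * q ^ k)"
proof -
  have "ereal (norm (complex_of_real q)) < 1" using assms by simp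
  also have "1 \<le> conv_radius (fps_nth f)" using assms by (simp add: fps_conv_radius_def)
  finally have "ereal (norm (complex_of_real q)) < conv_radius (fps_nth f)" .
  from abs_summable_in_conv_radius[OF this] show ?thesis
    using assms by (simp add: norm_mult norm_power)
qed

lemma fps_conv_radius_hadamard:
  fixes f g :: "complex fps"
  assumes f: "fps_conv_radius f \<ge> 1" and g: "fps_conv_radius g \<ge> 1"
  shows "fps_conv_radius (hadamard f g) \<ge> 1"
  unfolding fps_conv_radius_def
proof (rule conv_radius_geI_ex')
  fix r :: real assume r: "0 < r" "ereal r < 1"
  define q where "q = sqrt r"
  have q: "0 \<le> q" "q < 1" "q * q = r" using r by (auto simp: q_def)
  have sum_f: "summable (\<lambda>n. norm (fps_nth f n) * q ^ n)"
    using summable_norm_fps_nth_power[OF f q(1,2)] .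
  obtain M where M: "\<And>n. norm (norm (fps_nth g n) * q ^ n) \<le> M"
    using summable_imp_Bseq[OF summable_norm_fps_nth_power[OF g q(1,2)]] by (meson BseqE)
  have bound: "norm (fps_nth (hadamard f g) n * complex_of_real r ^ n)
      \<le> M * (norm (fps_nth f n) * q ^ n)" for n
  proof -
    have "norm (fps_nth (hadamard f g) n * complex_of_real r ^ n)
        = (norm (fps_nth f n) * q ^ n) * (norm (fps_nth g n) * q ^ n)"
      using q r(1) by (simp add: norm_mult norm_power power_mult_distrib[symmetric] mult_ac)
    also have "\<dots> \<le> (norm (fps_nth f n) * q ^ n) * M"
      using M[of n] q by (intro mult_left_mono) auto
    finally show ?thesis by (simp add: mult_ac)
  qed
  show "summable (\<lambda>n. fps_nth (hadamard f g) n * complex_of_real r ^ n)"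
    by (rule summable_comparison_test'[OF summable_mult[OF sum_f] bound])
qed

lemma fps_conv_radius_Pop:
  "x \<noteq> 0 \<Longrightarrow> fps_conv_radius (Pop x f) = fps_conv_radius f / ereal (norm x)"
  using conv_radius_mult_power[of x "fps_nth f"] by (simp add: fps_conv_radius_def)

lemma compact_subset_unit_ball_obtains_cball:
  fixes K :: "'a :: real_normed_vector set"
  assumes "compact K" "K \<subseteq> ball 0 1"
  obtains s where "0 \<le> s" "s < 1" "K \<subseteq> cball 0 s"
proof (cases "K = {}")
  case True
  then show ?thesis using that[of 0] by auto
next
  case False
  have "compact (norm ` K)"
    using assms(1) by (intro compact_continuous_image continuous_intros)
  then obtain m where "m \<in> norm ` K" "\<forall>t\<in>norm ` K. t \<le> m"
    using compact_attains_sup[of "norm ` K"] False by auto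
  then show ?thesis using that[of m] assms(2) by (fastforce simp: subset_iff)
qed

lemma fps_nth_Cauchy_inequality:
  fixes d :: "complex fps"
  assumes "0 < \<rho>" "ereal \<rho> < fps_conv_radius d"
    and B: "\<And>w. norm w = \<rho> \<Longrightarrow> norm (eval_fps d w) \<le> B"
  shows "norm (fps_nth d k) \<le> B / \<rho> ^ k"
proof -
  have sub: "cball (0 :: complex) \<rho> \<subseteq> eball 0 (fps_conv_radius d)"
  proof
    fix w :: complex assume "w \<in> cball 0 \<rho>"
    then have "ereal (norm w) \<le> ereal \<rho>" by simp
    then have "ereal (norm w) < fps_conv_radius d" using assms(2) by (rule le_less_trans)
    then show "w \<in> eball 0 (fps_conv_radius d)" by simp
  qed
  have "fps_conv_radius d > 0" using assms by (simp add: le_less_trans[of _ "ereal \<rho>"])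
  then have expansion: "fps_nth d k = (deriv ^^ k) (eval_fps d) 0 / fact k"
    by (intro fps_nth_fps_expansion eval_fps_has_fps_expansion)
  have Cauchy: "norm ((deriv ^^ k) (eval_fps d) 0) \<le> fact k * B / \<rho> ^ k"
  proof (rule Cauchy_inequality)
    show "eval_fps d holomorphic_on ball 0 \<rho>"
      using sub by (intro holomorphic_on_eval_fps) auto
    show "continuous_on (cball 0 \<rho>) (eval_fps d)"
      using sub by (intro holomorphic_on_imp_continuous_on holomorphic_on_eval_fps)
    show "norm (eval_fps d w) \<le> B" if "norm (0 - w) = \<rho>" for w
      using that by (intro B) simp
  qed (rule assms(1))
  have "norm (fps_nth d k) = norm ((deriv ^^ k) (eval_fps d) 0) / fact k"
    by (simp add: expansion norm_divide)
  also have "\<dots> \<le> fact k * B / \<rho> ^ k / fact k"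
    by (rule divide_right_mono[OF Cauchy]) simp
  finally show ?thesis by simp
qed

lemma norm_eval_fps_hadamard_le:
  fixes f d :: "complex fps"
  assumes f: "fps_conv_radius f \<ge> 1"
    and \<rho>: "0 < \<rho>" "ereal \<rho> < fps_conv_radius d"
    and B: "\<And>w. norm w = \<rho> \<Longrightarrow> norm (eval_fps d w) \<le> B"
    and z: "norm z \<le> s" "s < \<rho>"
  shows "norm (eval_fps (hadamard f d) z) \<le> B * (\<Sum>k. norm (fps_nth f k) * (s / \<rho>) ^ k)"
proof -
  define q where "q = s / \<rho>"
  have "0 \<le> s" using z(1) norm_ge_zero order_trans by blast
  then have q: "0 \<le> q" "q < 1" using z(2) \<rho>(1) by (simp_all add: q_def)
  have "norm (eval_fps d (of_real \<rho>)) \<le> B" using \<rho>(1) by (intro B) simp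
  then have B0: "0 \<le> B" using norm_ge_zero order_trans by blast
  have sum_f: "summable (\<lambda>k. B * (norm (fps_nth f k) * q ^ k))"
    by (intro summable_mult summable_norm_fps_nth_power f q)
  have term_bound:
    "norm (fps_nth (hadamard f d) k * z ^ k) \<le> B * (norm (fps_nth f k) * q ^ k)" for k
  proof -
    have "norm (fps_nth (hadamard f d) k * z ^ k)
        = norm (fps_nth f k) * norm (fps_nth d k) * norm z ^ k"
      by (simp add: norm_mult norm_power)
    also have "\<dots> \<le> norm (fps_nth f k) * (B / \<rho> ^ k) * s ^ k"
      using z B0 \<rho>(1)
      by (intro mult_mono mult_left_mono power_mono fps_nth_Cauchy_inequality \<rho> B) auto
    also have "\<dots> = B * (norm (fps_nth f k) * q ^ k)"
      by (simp add: q_def power_divide)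
    finally show ?thesis .
  qed
  have sum_term: "summable (\<lambda>k. norm (fps_nth (hadamard f d) k * z ^ k))"
    by (rule summable_comparison_test'[OF sum_f]) (use term_bound in simp)
  have "norm (eval_fps (hadamard f d) z) \<le> (\<Sum>k. norm (fps_nth (hadamard f d) k * z ^ k))"
    unfolding eval_fps_def by (rule summable_norm[OF sum_term])
  also have "\<dots> \<le> (\<Sum>k. B * (norm (fps_nth f k) * q ^ k))"
    by (rule suminf_le[OF term_bound sum_term sum_f])
  also have "\<dots> = B * (\<Sum>k. norm (fps_nth f k) * q ^ k)"
    by (rule suminf_mult) (intro summable_norm_fps_nth_power f q)
  finally show ?thesis by (simp add: q_def)
qed

lemma norm_eval_fps_hadamard_diff_le:
  fixes f g h :: "complex fps"
  assumes f: "fps_conv_radius f \<ge> 1" and g: "fps_conv_radius g \<ge> 1"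
    and h: "fps_conv_radius h \<ge> 1"
    and \<rho>: "0 < \<rho>" "\<rho> < 1"
    and \<epsilon>: "\<And>w. norm w = \<rho> \<Longrightarrow> norm (eval_fps h w - eval_fps g w) \<le> \<epsilon>"
    and z: "norm z \<le> s" "s < \<rho>"
  shows "norm (eval_fps (hadamard f h) z - eval_fps (hadamard f g) z)
           \<le> \<epsilon> * (\<Sum>k. norm (fps_nth f k) * (s / \<rho>) ^ k)"
proof -
  have in_disc: "ereal (norm w) < fps_conv_radius h" "ereal (norm w) < fps_conv_radius g"
    "ereal (norm w) < fps_conv_radius (hadamard f h)"
    "ereal (norm w) < fps_conv_radius (hadamard f g)"
    if "norm w < 1" for w :: complex
    using that less_le_trans[of "ereal (norm w)" 1] h g fps_conv_radius_hadamard[OF f] by auto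
  have "ereal \<rho> < 1" using \<rho>(2) by simp
  then have radius: "ereal \<rho> < fps_conv_radius (h - g)"
    using fps_conv_radius_diff_ge[OF h g] by (rule less_le_trans)
  have "norm z < 1" using z \<rho>(2) by simp
  then have "eval_fps (hadamard f h) z - eval_fps (hadamard f g) z
      = eval_fps (hadamard f (h - g)) z"
    using in_disc by (simp add: hadamard_diff_right eval_fps_diff)
  also have "norm \<dots> \<le> \<epsilon> * (\<Sum>k. norm (fps_nth f k) * (s / \<rho>) ^ k)"
  proof (rule norm_eval_fps_hadamard_le[OF f \<rho>(1) radius _ z])
    fix w :: complex assume w: "norm w = \<rho>"
    then have "norm w < 1" using \<rho>(2) by simp
    then show "norm (eval_fps (h - g) w) \<le> \<epsilon>"
      using in_disc(1,2) \<epsilon>[OF w] by (simp add: eval_fps_diff)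
  qed
  finally show ?thesis .
qed

lemma uniform_limit_hadamard:
  fixes f g :: "complex fps" and H :: "'a \<Rightarrow> complex fps"
  assumes f: "fps_conv_radius f \<ge> 1" and g: "fps_conv_radius g \<ge> 1"
    and H: "\<And>n. fps_conv_radius (H n) \<ge> 1"
    and lim: "\<And>K. compact K \<Longrightarrow> K \<subseteq> ball 0 1 \<Longrightarrow>
                uniform_limit K (\<lambda>n. eval_fps (H n)) (eval_fps g) F"
    and K: "compact K" "K \<subseteq> ball 0 1"
  shows "uniform_limit K (\<lambda>n. eval_fps (hadamard f (H n))) (eval_fps (hadamard f g)) F"
proof (rule uniform_limitI)
  fix e :: real assume e: "0 < e"
  obtain s where s: "0 \<le> s" "s < 1" "K \<subseteq> cball 0 s"
    using compact_subset_unit_ball_obtains_cball[OF K] .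
  define \<rho> where "\<rho> = (1 + s) / 2"
  have \<rho>: "0 < \<rho>" "s < \<rho>" "\<rho> < 1" using s by (auto simp: \<rho>_def)
  define C where "C = (\<Sum>k. norm (fps_nth f k) * (s / \<rho>) ^ k)"
  have C: "0 \<le> C"
    unfolding C_def using s \<rho> by (intro suminf_nonneg summable_norm_fps_nth_power f) auto
  define \<epsilon> where "\<epsilon> = e / (C + 1)"
  have \<epsilon>: "0 < \<epsilon>" "\<epsilon> * C < e" using e C by (simp_all add: \<epsilon>_def field_simps)
  have "sphere 0 \<rho> \<subseteq> ball (0 :: complex) 1" using \<rho> by auto
  then have "\<forall>\<^sub>F n in F. \<forall>w\<in>sphere 0 \<rho>. dist (eval_fps (H n) w) (eval_fps g w) < \<epsilon>"
    using \<epsilon> by (intro uniform_limitD[OF lim] compact_sphere) auto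
  then show "\<forall>\<^sub>F n in F. \<forall>z\<in>K.
      dist (eval_fps (hadamard f (H n)) z) (eval_fps (hadamard f g) z) < e"
  proof eventually_elim
    case (elim n)
    show ?case
    proof
      fix z assume "z \<in> K"
      then have z: "norm z \<le> s" using s by auto
      have "dist (eval_fps (hadamard f (H n)) z) (eval_fps (hadamard f g) z) \<le> \<epsilon> * C"
        unfolding C_def dist_norm
        using elim by (intro norm_eval_fps_hadamard_diff_le[OF f g H \<rho>(1,3) _ z \<rho>(2)])
          (simp add: dist_norm less_imp_le)
      also have "\<dots> < e" by (rule \<epsilon>(2))
      finally show "dist (eval_fps (hadamard f (H n)) z) (eval_fps (hadamard f g) z) < e" .
    qed
  qed
qed

lemma lu_closure_mono: "S \<subseteq> T \<Longrightarrow> lu_closure S \<subseteq> lu_closure T"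
  unfolding lu_closure_def by blast

lemma lu_closure_obtains_sequence:
  assumes "g \<in> lu_closure S"
  obtains H where "\<And>n. H n \<in> S"
    and "\<And>K. compact K \<Longrightarrow> K \<subseteq> ball 0 1 \<Longrightarrow>
           uniform_limit K (\<lambda>n. eval_fps (H n)) (eval_fps g) sequentially"
proof -
  define K where "K n = cball (0 :: complex) (1 - inverse (Suc n))" for n
  have "K n \<subseteq> ball 0 1" for n
  proof
    fix z assume "z \<in> K n"
    then have "norm z \<le> 1 - inverse (Suc n)" by (simp add: K_def)
    moreover have "0 < inverse (real (Suc n))" by simp
    ultimately have "norm z < 1" by linarith
    then show "z \<in> ball 0 1" by simp
  qed
  then have "\<forall>n. \<exists>h\<in>S. \<forall>z\<in>K n. norm (eval_fps h z - eval_fps g z) < inverse (Suc n)"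
    using assms by (auto simp: lu_closure_def K_def)
  then obtain H where H: "\<And>n. H n \<in> S"
    "\<And>n z. z \<in> K n \<Longrightarrow> norm (eval_fps (H n) z - eval_fps g z) < inverse (Suc n)"
    by metis
  have "uniform_limit L (\<lambda>n. eval_fps (H n)) (eval_fps g) sequentially"
    if L: "compact L" "L \<subseteq> ball 0 1" for L
  proof (rule uniform_limitI)
    fix e :: real assume "0 < e"
    obtain s where s: "s < 1" "L \<subseteq> cball 0 s"
      using compact_subset_unit_ball_obtains_cball[OF L] by blast
    obtain N where N: "inverse (Suc N) < min e (1 - s)"
      using reals_Archimedean[of "min e (1 - s)"] \<open>0 < e\<close> s by auto
    show "\<forall>\<^sub>F n in sequentially. \<forall>z\<in>L. dist (eval_fps (H n) z) (eval_fps g z) < e"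
    proof (rule eventually_sequentiallyI[of N], intro ballI)
      fix n z assume "N \<le> n" "z \<in> L"
      then have "inverse (real (Suc n)) \<le> inverse (real (Suc N))" "norm z \<le> s"
        using s by auto
      with N have "norm z \<le> 1 - inverse (real (Suc n))" "inverse (real (Suc n)) < e"
        by linarith+
      then show "dist (eval_fps (H n) z) (eval_fps g z) < e"
        using H(2)[of z n] by (simp add: K_def dist_norm)
    qed
  qed
  with H(1) show ?thesis using that by blast
qed

lemma fps_nth_0_lu_closure:
  assumes g: "g \<in> lu_closure S" and S: "\<And>h. h \<in> S \<Longrightarrow> fps_nth h 0 = c"
  shows "fps_nth g 0 = c"
proof -
  obtain H where H: "\<And>n. H n \<in> S"
    and lim: "\<And>K. compact K \<Longrightarrow> K \<subseteq> ball 0 1 \<Longrightarrow>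
                uniform_limit K (\<lambda>n. eval_fps (H n)) (eval_fps g) sequentially"
    using lu_closure_obtains_sequence[OF g] by blast
  have "(\<lambda>n. eval_fps (H n) 0) \<longlonglongrightarrow> eval_fps g 0"
    by (rule tendsto_uniform_limitI[OF lim[of "{0}"]]) auto
  then show ?thesis using S[OF H] by (simp add: eval_fps_at_0 LIMSEQ_const_iff)
qed

lemma Hurwitz_nonvanishing:
  assumes S: "open S" "connected S"
    and hol_F: "\<And>n::nat. F n holomorphic_on S" and hol_g: "g holomorphic_on S"
    and lim: "\<And>K. compact K \<Longrightarrow> K \<subseteq> S \<Longrightarrow> uniform_limit K F g sequentially"
    and nz: "\<And>n z. z \<in> S \<Longrightarrow> F n z \<noteq> 0"
    and z0: "z0 \<in> S" "g z0 \<noteq> 0" and z: "z \<in> S"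
  shows "g z \<noteq> 0"
proof (cases "g constant_on S")
  case True
  then show ?thesis using z0 z by (metis constant_on_def)
next
  case False
  show ?thesis by (rule Hurwitz_no_zeros[OF S hol_F hol_g lim False nz z])
qed

lemma Tdual_cm_subset_dual: "Tdual (cm V) \<subseteq> dual V"
proof
  fix h assume h: "h \<in> Tdual (cm V)"
  have "eval_fps (hadamard f h) z \<noteq> 0" if "f \<in> V" "z \<in> ball 0 1" for f z
  proof -
    have "z \<in> cball 0 1" using that(2) by simp
    then have "Pop z f \<in> cm V" using that(1) unfolding cm_def by blast
    then have "eval_fps (hadamard (Pop z f) h) 1 \<noteq> 0" using h by (simp add: Tdual_def)
    then show ?thesis by (simp add: hadamard_Pop_left eval_fps_Pop)
  qed
  moreover have "h \<in> A0_space"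
    using h by (auto simp: Tdual_def AD0_space_def AD_space_def A0_space_def A_space_def)
  ultimately show "h \<in> dual V" by (simp add: dual_def)
qed

lemma Pop_mem_Tdual_cm:
  assumes g: "g \<in> dual V" and x: "0 < norm x" "norm x < 1"
  shows "Pop x g \<in> Tdual (cm V)"
proof -
  have "1 < 1 / ereal (norm x)" using x by (simp add: one_ereal_def)
  also have "\<dots> \<le> fps_conv_radius g / ereal (norm x)"
    using g x by (intro ereal_divide_right_mono) (auto simp: dual_def A0_space_def A_space_def)
  also have "\<dots> = fps_conv_radius (Pop x g)"
    using x by (simp add: fps_conv_radius_Pop)
  finally have "fps_conv_radius (Pop x g) > 1" .
  moreover have "fps_nth (Pop x g) 0 = 1" using g by (simp add: dual_def A0_space_def)
  moreover have "eval_fps (hadamard f (Pop x g)) 1 \<noteq> 0" if "f \<in> cm V" for f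
  proof -
    from that obtain y f0 where f0: "f = Pop y f0" "f0 \<in> V" "norm y \<le> 1"
      by (auto simp: cm_def)
    have "norm (y * x) \<le> norm x" using f0(3) by (simp add: norm_mult mult_left_le_one_le)
    then have "eval_fps (hadamard f0 g) (y * x) \<noteq> 0"
      using g f0(2) x(2) by (simp add: dual_def)
    then show ?thesis by (simp add: f0(1) hadamard_Pop_left hadamard_Pop_right eval_fps_Pop)
  qed
  ultimately show ?thesis by (simp add: Tdual_def AD0_space_def AD_space_def)
qed

lemma uniform_limit_Pop_at_left_1:
  fixes g :: "complex fps"
  assumes g: "fps_conv_radius g \<ge> 1" and K: "compact K" "K \<subseteq> ball 0 1"
  shows "uniform_limit K (\<lambda>r. eval_fps (Pop (of_real r) g)) (eval_fps g) (at_left 1)"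
proof (rule uniform_limitI)
  fix e :: real assume e: "0 < e"
  obtain s where s: "s < 1" "K \<subseteq> cball 0 s"
    using compact_subset_unit_ball_obtains_cball[OF K] by blast
  have "cball 0 s \<subseteq> ball (0 :: complex) 1" using s by auto
  then have "continuous_on (cball 0 s) (eval_fps g)"
    by (intro holomorphic_on_imp_continuous_on holomorphic_on_subset[OF
          holomorphic_on_eval_fps_unit_ball[OF g]])
  then have "uniformly_continuous_on (cball 0 s) (eval_fps g)"
    by (rule compact_uniformly_continuous) simp
  then obtain \<delta> where \<delta>: "0 < \<delta>"
    "\<And>x x'. x \<in> cball 0 s \<Longrightarrow> x' \<in> cball 0 s \<Longrightarrow> dist x' x < \<delta> \<Longrightarrow>
       dist (eval_fps g x') (eval_fps g x) < e"
    unfolding uniformly_continuous_on_def using e by metis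
  have "\<forall>\<^sub>F r in at_left 1. r \<in> {max 0 (1 - \<delta>)<..<1}"
    using \<delta>(1) by (intro eventually_at_left_real) simp
  then show "\<forall>\<^sub>F r in at_left 1. \<forall>z\<in>K. dist (eval_fps (Pop (of_real r) g) z) (eval_fps g z) < e"
  proof eventually_elim
    case (elim r)
    then have r: "0 < r" "r < 1" "1 - r < \<delta>" by auto
    show ?case
    proof
      fix z assume "z \<in> K"
      then have z: "z \<in> cball 0 s" "norm z < 1" using s K by auto
      have "dist (of_real r * z) z = norm (of_real (1 - r) * z)"
        by (simp add: dist_norm norm_minus_commute algebra_simps)
      also have "\<dots> = (1 - r) * norm z"
        using r by (simp add: norm_mult del: of_real_diff)
      also have "\<dots> \<le> 1 - r" using r z by (simp add: mult_left_le)
      finally have "dist (of_real r * z) z < \<delta>" using r by simp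
      moreover have "of_real r * z \<in> cball 0 s"
        using r z by (auto simp: norm_mult intro: order_trans[OF mult_left_le_one_le])
      ultimately show "dist (eval_fps (Pop (of_real r) g) z) (eval_fps g z) < e"
        using \<delta>(2) z(1) by (simp add: eval_fps_Pop)
    qed
  qed
qed

lemma dual_subset_lu_closure_Tdual_cm: "dual V \<subseteq> lu_closure (Tdual (cm V))"
proof
  fix g assume g: "g \<in> dual V"
  then have R: "fps_conv_radius g \<ge> 1" by (simp add: dual_def A0_space_def A_space_def)
  have "\<exists>h\<in>Tdual (cm V). \<forall>z\<in>K. norm (eval_fps h z - eval_fps g z) < e"
    if K: "compact K" "K \<subseteq> ball 0 1" and e: "0 < e" for K e
  proof -
    have "\<forall>\<^sub>F r in at_left 1. r \<in> {0<..<1} \<and>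
        (\<forall>z\<in>K. dist (eval_fps (Pop (of_real r) g) z) (eval_fps g z) < e)"
      using eventually_at_left_real[of 0 1]
        uniform_limitD[OF uniform_limit_Pop_at_left_1[OF R K] e]
      by (rule eventually_conj) simp
    then obtain r where "r \<in> {0<..<1}"
        "\<forall>z\<in>K. dist (eval_fps (Pop (of_real r) g) z) (eval_fps g z) < e"
      using eventually_happens'[OF trivial_limit_at_left_real] by blast
    then show ?thesis using Pop_mem_Tdual_cm[OF g, of "of_real r"] by (auto simp: dist_norm)
  qed
  with R show "g \<in> lu_closure (Tdual (cm V))" by (simp add: lu_closure_def A_space_def)
qed

lemma lu_closure_dual_subset:
  assumes V: "V \<subseteq> A0_space"
  shows "lu_closure (dual V) \<subseteq> dual V"
proof
  fix g assume g: "g \<in> lu_closure (dual V)"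
  then have R: "fps_conv_radius g \<ge> 1" by (simp add: lu_closure_def A_space_def)
  obtain H where H: "\<And>n. H n \<in> dual V"
    and lim: "\<And>K. compact K \<Longrightarrow> K \<subseteq> ball 0 1 \<Longrightarrow>
                uniform_limit K (\<lambda>n. eval_fps (H n)) (eval_fps g) sequentially"
    using lu_closure_obtains_sequence[OF g] by blast
  have RH: "fps_conv_radius (H n) \<ge> 1" for n
    using H by (simp add: dual_def A0_space_def A_space_def)
  have g0: "fps_nth g 0 = 1"
    using g by (rule fps_nth_0_lu_closure) (simp add: dual_def A0_space_def)
  have "eval_fps (hadamard f g) z \<noteq> 0" if f: "f \<in> V" and z: "z \<in> ball 0 1" for f z
  proof -
    have Rf: "fps_conv_radius f \<ge> 1" "fps_nth f 0 = 1"
      using f V by (auto simp: A0_space_def A_space_def)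
    show ?thesis
    proof (rule Hurwitz_nonvanishing[of "ball 0 1" "\<lambda>n. eval_fps (hadamard f (H n))"
          "eval_fps (hadamard f g)"])
      show "eval_fps (hadamard f (H n)) holomorphic_on ball 0 1" for n
        by (intro holomorphic_on_eval_fps_unit_ball fps_conv_radius_hadamard Rf RH)
      show "eval_fps (hadamard f g) holomorphic_on ball 0 1"
        by (intro holomorphic_on_eval_fps_unit_ball fps_conv_radius_hadamard Rf R)
      show "uniform_limit K (\<lambda>n. eval_fps (hadamard f (H n))) (eval_fps (hadamard f g))
          sequentially" if "compact K" "K \<subseteq> ball 0 1" for K
        by (rule uniform_limit_hadamard[OF Rf(1) R RH lim that])
      show "eval_fps (hadamard f (H n)) w \<noteq> 0" if "w \<in> ball 0 1" for n w
        using H[of n] f that by (simp add: dual_def)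
      show "eval_fps (hadamard f g) 0 \<noteq> 0"
        using Rf g0 by (simp add: eval_fps_at_0)
    qed (use z in auto)
  qed
  with R g0 show "g \<in> dual V" by (simp add: dual_def A0_space_def A_space_def)
qed

theorem theorem1:
  assumes "V \<subseteq> A0_space"
  shows "dual V = lu_closure (Tdual (cm V))"
proof (rule antisym)
  show "dual V \<subseteq> lu_closure (Tdual (cm V))"
    by (rule dual_subset_lu_closure_Tdual_cm)
  have "lu_closure (Tdual (cm V)) \<subseteq> lu_closure (dual V)"
    by (intro lu_closure_mono Tdual_cm_subset_dual)
  also have "\<dots> \<subseteq> dual V"
    using assms by (rule lu_closure_dual_subset)
  finally show "lu_closure (Tdual (cm V)) \<subseteq> dual V" .
qed

end
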